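(* There exist constants $r,C>1$ such that for every $q\ge 2$ there exist $n\in\mathbb{N}$, $p\in(0,1)$ and a function $f\colon(\{0,1\}^n,\mu_p)\to\mathbb{R}$ such that (a) $\|f_{S\to x}\|_2\le r^{|S|}\|f\|_2$ for all $S\subseteq[n]$ and all $x\in\{0,1\}^S$, and (b) $\|T_\rho f\|_q>\|f\|_2$ for all $\rho>\frac{C\log q}{rq}$ (with $\rho\le 1$).
   Context: $\mu_p$ is the $p$-biased product measure on $\{0,1\}^n$, $\mu_p(x)=p^{|\{i:x_i=1\}|}(1-p)^{|\{i:x_i=0\}|}$; all norms are with respect to $\mu_p$. $f_{S\to x}(y)=f(x,y)$ is the restriction. The noise operator $T_\rho f(x)=\mathbb{E}_y[f(y)]$, where $y$ keeps each coordinate of $x$ independently with probability $\rho$ and otherwise resamples it from the $p$-biased distribution on $\{0,1\}$. $\log$ is the natural logarithm. *)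

theory Defs
  imports Complex_Main
begin

text \<open>Points of \<open>{0,1}^I\<close> (I a finite coordinate set) are represented by the
  subsets \<open>x \<subseteq> I\<close> of coordinates equal to 1.\<close>

definition pmu :: "real \<Rightarrow> nat set \<Rightarrow> nat set \<Rightarrow> real" where
  "pmu p I x = p ^ card x * (1 - p) ^ (card I - card x)"

definition pnorm :: "real \<Rightarrow> nat set \<Rightarrow> real \<Rightarrow> (nat set \<Rightarrow> real) \<Rightarrow> real" where
  "pnorm p I q g = (\<Sum>x\<in>Pow I. pmu p I x * \<bar>g x\<bar> powr q) powr (1 / q)"

text \<open>Restriction \<open>f_{S\<rightarrow>x}(y) = f(x,y)\<close>, a function on \<open>{0,1}^(I - S)\<close>.\<close>
definition restr :: "(nat set \<Rightarrow> real) \<Rightarrow> nat set \<Rightarrow> nat set \<Rightarrow> real" where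
  "restr f x y = f (x \<union> y)"

text \<open>Noise operator: each coordinate is kept with prob. \<open>\<rho>\<close>, otherwise
  resampled from the p-biased distribution.\<close>
definition noise_kernel :: "real \<Rightarrow> real \<Rightarrow> bool \<Rightarrow> bool \<Rightarrow> real" where
  "noise_kernel p \<rho> a b = \<rho> * (if a = b then 1 else 0) + (1 - \<rho>) * (if b then p else 1 - p)"

definition noise_op :: "real \<Rightarrow> nat set \<Rightarrow> real \<Rightarrow> (nat set \<Rightarrow> real) \<Rightarrow> nat set \<Rightarrow> real" where
  "noise_op p I \<rho> f x =
     (\<Sum>y\<in>Pow I. (\<Prod>i\<in>I. noise_kernel p \<rho> (i \<in> x) (i \<in> y)) * f y)"

end

theory Submission imports Defs begin

text \<open>One coordinate suffices. Take \<open>f = 1 + x_0\<close> under bias \<open>p = 1/(6q)\<close>. Its values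
  lie in \<open>[1,2]\<close>, so all restrictions are bounded by \<open>2^|S| \<parallel>f\<parallel>_2\<close>, and
  \<open>\<parallel>f\<parallel>_2^q = (1+3p)^(q/2) \<le> e^(1/4) < 3/2\<close>. On the other hand \<open>T_\<rho> f \<ge> 1\<close> everywhere and
  \<open>T_\<rho> f \<ge> 1 + \<rho>\<close> at the rare point \<open>x_0 = 1\<close>, so \<open>\<parallel>T_\<rho> f\<parallel>_q^q \<ge> 1 - p + p (1+\<rho>)^q\<close>. This
  exceeds \<open>1 - p + p (1 + 3q) = 3/2\<close> once \<open>(1+\<rho>)^q \<ge> e^(q\<rho>/2) > q^3\<close>, i.e. for
  \<open>\<rho> > 6 ln q / q\<close>.\<close>

lemma half_le_ln_one_plus:
  fixes x :: real
  assumes "0 \<le> x" "x \<le> 1"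
  shows "x / 2 \<le> ln (1 + x)"
proof -
  have "ln (1 / (1 + x)) \<le> 1 / (1 + x) - 1"
    using assms by (intro ln_le_minus_one) auto
  moreover have "ln (1 / (1 + x)) = - ln (1 + x)"
    using assms by (simp add: ln_div)
  moreover have "1 / (1 + x) - 1 = - x / (1 + x)"
    using assms by (simp add: field_simps)
  moreover have "x / 2 \<le> x / (1 + x)"
    using assms by (intro divide_left_mono) auto
  ultimately show ?thesis by linarith
qed

lemma exp_half_mult_le_one_plus_powr:
  fixes x a :: real
  assumes "0 < x" "x \<le> 1" "0 \<le> a"
  shows "exp (a * x / 2) \<le> (1 + x) powr a"
proof -
  have "a * (x / 2) \<le> a * ln (1 + x)"
    using assms half_le_ln_one_plus[of x] by (intro mult_left_mono) auto
  then show ?thesis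
    using assms by (simp add: powr_def)
qed

lemma one_plus_powr_le_exp_mult:
  fixes x a :: real
  assumes "0 < x" "0 \<le> a"
  shows "(1 + x) powr a \<le> exp (a * x)"
proof -
  have "a * ln (1 + x) \<le> a * x"
    using assms ln_le_minus_one[of "1 + x"] by (intro mult_left_mono) auto
  then show ?thesis
    using assms by (simp add: powr_def)
qed

lemma exp_quarter_le: "exp (1 / 4 :: real) \<le> 3 / 2"
proof -
  have "1 + (-1/4) \<le> exp (-1/4 :: real)"
    by (rule exp_ge_add_one_self)
  then have "exp (1/4 :: real) * (3/4) \<le> 1"
    by (simp add: exp_minus field_simps)
  then show ?thesis by simp
qed

lemma cube_lt_one_plus_powr:
  fixes q \<rho> :: real
  assumes "2 \<le> q" "6 * ln q / q < \<rho>" "\<rho> \<le> 1"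
  shows "q ^ 3 < (1 + \<rho>) powr q"
proof -
  have "0 \<le> 6 * ln q / q"
    using assms by simp
  then have "0 < \<rho>"
    using assms by linarith
  have "q ^ 3 = exp (3 * ln q)"
    using assms exp_of_nat_mult[of 3 "ln q"] by simp
  also have "\<dots> < exp (q * \<rho> / 2)"
    using assms by (simp add: field_simps)
  also have "\<dots> \<le> (1 + \<rho>) powr q"
    using assms \<open>0 < \<rho>\<close> by (intro exp_half_mult_le_one_plus_powr) auto
  finally show ?thesis .
qed

lemma small_bias_powr_inequality:
  fixes q \<rho> :: real
  assumes q: "2 \<le> q" and \<rho>: "6 * ln q / q < \<rho>" "\<rho> \<le> 1"
  defines "p \<equiv> 1 / (6 * q)"
  shows "(1 + 3 * p) powr (q / 2) < (1 - p) + p * (1 + \<rho>) powr q"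
proof -
  have "0 < p"
    using q by (simp add: p_def)
  have "4 \<le> q * q"
    using q mult_mono[of 2 q 2 q] by simp
  then have "4 * q \<le> q * q * q"
    using q by (intro mult_right_mono) auto
  then have "1 + 3 * q \<le> q ^ 3"
    unfolding power3_eq_cube using q by linarith
  then have "1 + 3 * q < (1 + \<rho>) powr q"
    using cube_lt_one_plus_powr[OF q \<rho>] by linarith
  then have "3 / 2 < (1 - p) + p * (1 + \<rho>) powr q"
    using q \<open>0 < p\<close> by (simp add: p_def field_simps)
  moreover have "(1 + 3 * p) powr (q / 2) \<le> exp (q / 2 * (3 * p))"
    using q \<open>0 < p\<close> by (intro one_plus_powr_le_exp_mult) auto
  moreover have "exp (q / 2 * (3 * p)) = exp (1 / 4)"
    using q by (simp add: p_def)
  ultimately show ?thesis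
    using exp_quarter_le by linarith
qed

lemma pnorm_singleton:
  "pnorm p {i} q h = ((1 - p) * \<bar>h {}\<bar> powr q + p * \<bar>h {i}\<bar> powr q) powr (1 / q)"
proof -
  have "Pow {i} = {{}, {i}}" by auto
  then show ?thesis
    by (simp add: pnorm_def pmu_def)
qed

lemma pnorm_empty_two: "pnorm p {} 2 h = \<bar>h {}\<bar>"
  by (simp add: pnorm_def pmu_def powr_powr)

definition one_plus_x0 :: "nat set \<Rightarrow> real" where
  "one_plus_x0 y = (if 0 \<in> y then 2 else 1)"

lemma pnorm_two_one_plus_x0:
  assumes "0 < p"
  shows "pnorm p {0} 2 one_plus_x0 = sqrt (1 + 3 * p)"
  using assms by (simp add: pnorm_singleton one_plus_x0_def algebra_simps powr_half_sqrt)

lemma restriction_bound_one_plus_x0: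
  assumes "0 < p" "S \<subseteq> {0}" "x \<subseteq> S"
  shows "pnorm p ({0} - S) 2 (restr one_plus_x0 x) \<le> 2 ^ card S * pnorm p {0} 2 one_plus_x0"
proof (cases "S = {}")
  case True
  moreover have "restr one_plus_x0 {} = one_plus_x0"
    by (simp add: restr_def fun_eq_iff)
  ultimately show ?thesis
    using assms by simp
next
  case False
  then have "S = {0}"
    using assms by auto
  moreover have "1 \<le> 2 * sqrt (1 + 3 * p)"
    using assms real_sqrt_ge_one[of "1 + 3 * p"] by linarith
  ultimately show ?thesis
    using assms by (auto simp add: pnorm_empty_two pnorm_two_one_plus_x0 restr_def one_plus_x0_def)
qed

lemma noise_one_plus_x0_lower_bounds:
  assumes "0 \<le> p" "0 \<le> \<rho>" "\<rho> \<le> 1"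
  shows "1 \<le> noise_op p {0} \<rho> one_plus_x0 {}"
    and "1 + \<rho> \<le> noise_op p {0} \<rho> one_plus_x0 {0}"
proof -
  have Pow: "Pow {0 :: nat} = {{}, {0}}" by auto
  have "0 \<le> (1 - \<rho>) * p"
    using assms by simp
  then show "1 \<le> noise_op p {0} \<rho> one_plus_x0 {}"
    and "1 + \<rho> \<le> noise_op p {0} \<rho> one_plus_x0 {0}"
    by (simp_all add: noise_op_def noise_kernel_def Pow one_plus_x0_def algebra_simps)
qed

lemma noise_one_plus_x0_pnorm_gt:
  fixes q \<rho> :: real
  assumes q: "2 \<le> q" and \<rho>: "6 * ln q / q < \<rho>" "\<rho> \<le> 1"
  defines "p \<equiv> 1 / (6 * q)"
  shows "pnorm p {0} 2 one_plus_x0 < pnorm p {0} q (noise_op p {0} \<rho> one_plus_x0)"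
proof -
  let ?T = "noise_op p {0} \<rho> one_plus_x0"
  have p: "0 < p" "p < 1"
    using q by (auto simp: p_def field_simps)
  have "0 \<le> 6 * ln q / q"
    using q by simp
  then have "0 < \<rho>"
    using \<rho> by linarith
  note T = noise_one_plus_x0_lower_bounds[of p \<rho>]
  have "(1 - p) * 1 \<le> (1 - p) * \<bar>?T {}\<bar> powr q"
    using T p q \<open>0 < \<rho>\<close> \<rho> by (intro mult_left_mono ge_one_powr_ge_zero) auto
  moreover have "p * (1 + \<rho>) powr q \<le> p * \<bar>?T {0}\<bar> powr q"
    using T p q \<open>0 < \<rho>\<close> \<rho> by (intro mult_left_mono powr_mono2) auto
  ultimately have "(1 + 3 * p) powr (q / 2) < (1 - p) * \<bar>?T {}\<bar> powr q + p * \<bar>?T {0}\<bar> powr q"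
    using small_bias_powr_inequality[OF q \<rho>] by (simp add: p_def)
  then have "((1 + 3 * p) powr (q / 2)) powr (1 / q)
      < ((1 - p) * \<bar>?T {}\<bar> powr q + p * \<bar>?T {0}\<bar> powr q) powr (1 / q)"
    using q by (intro powr_less_mono2) auto
  moreover have "((1 + 3 * p) powr (q / 2)) powr (1 / q) = sqrt (1 + 3 * p)"
    using q p by (simp add: powr_powr powr_half_sqrt)
  moreover have "pnorm p {0} q ?T = ((1 - p) * \<bar>?T {}\<bar> powr q + p * \<bar>?T {0}\<bar> powr q) powr (1 / q)"
    by (rule pnorm_singleton)
  ultimately show ?thesis
    using pnorm_two_one_plus_x0[OF p(1)] by simp
qed

theorem mainTheorem2:
  shows "\<exists>r C :: real. r > 1 \<and> C > 1 \<and>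
    (\<forall>q :: real. q \<ge> 2 \<longrightarrow>
      (\<exists>(n :: nat) (p :: real) (f :: nat set \<Rightarrow> real).
         0 < p \<and> p < 1 \<and>
         (\<forall>S x. S \<subseteq> {..<n} \<longrightarrow> x \<subseteq> S \<longrightarrow>
            pnorm p ({..<n} - S) 2 (restr f x) \<le> r ^ card S * pnorm p {..<n} 2 f) \<and>
         (\<forall>\<rho> :: real. C * ln q / (r * q) < \<rho> \<and> \<rho> \<le> 1 \<longrightarrow>
            pnorm p {..<n} q (noise_op p {..<n} \<rho> f) > pnorm p {..<n} 2 f)))"
proof (rule exI[of _ "2 :: real"], rule exI[of _ "12 :: real"], intro conjI allI impI)
  fix q :: real
  assume q: "2 \<le> q"
  define p where "p = 1 / (6 * q)"
  have p: "0 < p" "p < 1"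
    using q by (auto simp: p_def field_simps)
  have n: "{..<1 :: nat} = {0}" by auto
  have restriction: "\<forall>S x. S \<subseteq> {..<1} \<longrightarrow> x \<subseteq> S \<longrightarrow>
      pnorm p ({..<1} - S) 2 (restr one_plus_x0 x) \<le> 2 ^ card S * pnorm p {..<1} 2 one_plus_x0"
    unfolding n using restriction_bound_one_plus_x0[OF p(1)] by blast
  have noise: "\<forall>\<rho>. 12 * ln q / (2 * q) < \<rho> \<and> \<rho> \<le> 1 \<longrightarrow>
      pnorm p {..<1} q (noise_op p {..<1} \<rho> one_plus_x0) > pnorm p {..<1} 2 one_plus_x0"
    unfolding n p_def using noise_one_plus_x0_pnorm_gt[OF q] by simp
  from p restriction noise show "\<exists>(n :: nat) p f. 0 < p \<and> p < 1 \<and>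
      (\<forall>S x. S \<subseteq> {..<n} \<longrightarrow> x \<subseteq> S \<longrightarrow>
        pnorm p ({..<n} - S) 2 (restr f x) \<le> 2 ^ card S * pnorm p {..<n} 2 f) \<and>
      (\<forall>\<rho>. 12 * ln q / (2 * q) < \<rho> \<and> \<rho> \<le> 1 \<longrightarrow>
        pnorm p {..<n} q (noise_op p {..<n} \<rho> f) > pnorm p {..<n} 2 f)"
    by blast
qed simp_all

end
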